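(* Let $X$ be a separable infinite dimensional Banach space and $1\le p<\infty$. There does not exist $F\in\ell_p(\mathbb{Z},X)$ such that $\{F^{(k)}:k\in\mathbb{Z}\}$, in some order, is a (Schauder) basis for $\ell_p(\mathbb{Z},X)$.
   Context: $\ell_p(\mathbb{Z},X)=(\bigoplus_{n\in\mathbb{Z}}X)_{\ell_p}$ is the space of sequences $(f_n)_{n\in\mathbb{Z}}$ in $X$ with $\sum_n\|f_n\|^p<\infty$, normed by $(\sum_n\|f_n\|^p)^{1/p}$. For $F=(f_n)_{n\in\mathbb{Z}}$ and $k\in\mathbb{Z}$, $F^{(k)}=(f_{n-k})_{n\in\mathbb{Z}}$ is the shift of $F$ to the right by $k$. *)

theory Defs
  imports "HOL-Analysis.Analysis"
begin

definition lp_space :: "real \<Rightarrow> (int \<Rightarrow> 'a::real_normed_vector) set" where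
  "lp_space p = {f. (\<lambda>n. norm (f n) powr p) summable_on UNIV}"

definition lp_norm :: "real \<Rightarrow> (int \<Rightarrow> 'a::real_normed_vector) \<Rightarrow> real" where
  "lp_norm p f = (\<Sum>\<^sub>\<infinity>n. norm (f n) powr p) powr (1 / p)"

definition shift :: "int \<Rightarrow> (int \<Rightarrow> 'a) \<Rightarrow> (int \<Rightarrow> 'a)" where
  "shift k F = (\<lambda>n. F (n - k))"

definition lp_expansion ::
  "real \<Rightarrow> (nat \<Rightarrow> int \<Rightarrow> 'a::real_normed_vector) \<Rightarrow> (nat \<Rightarrow> real) \<Rightarrow> (int \<Rightarrow> 'a) \<Rightarrow> bool" where
  "lp_expansion p e a G \<longleftrightarrow>
     (\<lambda>N. lp_norm p (\<lambda>k. G k - (\<Sum>i<N. a i *\<^sub>R e i k))) \<longlonglongrightarrow> 0"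

definition lp_schauder_basis :: "real \<Rightarrow> (nat \<Rightarrow> int \<Rightarrow> 'a::real_normed_vector) \<Rightarrow> bool" where
  "lp_schauder_basis p e \<longleftrightarrow>
     (\<forall>i. e i \<in> lp_space p) \<and>
     (\<forall>G \<in> lp_space p. \<exists>!a. lp_expansion p e a G)"

end

theory Submission
  imports Defs
begin

text \<open>Suppose the shifts \<open>shift (\<sigma> i) F\<close>, for a bijection \<open>\<sigma> :: nat \<Rightarrow> int\<close>, form a Schauder basis.
  By the Baire category theorem (in the form of Zabreiko's lemma) the coefficient functionals
  are uniformly bounded, and since shifting permutes the basis they are shift covariant. Testing
  them against finite combinations of shifted copies of \<open>delta x\<close> shows that the coefficients of
  \<open>delta x\<close> are controlled by \<open>\<parallel>x\<parallel>\<close> uniformly in the tail of \<open>F\<close>. Evaluating the expansion of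
  \<open>delta x\<close> at \<open>0\<close> writes \<open>x = \<Sum>i. c\<^sub>i F(-\<sigma> i)\<close>, so every \<open>x\<close> lies within \<open>\<parallel>x\<parallel>/2\<close> of the span of
  finitely many values of \<open>F\<close>; by Riesz's lemma \<open>X\<close> is then finite dimensional.\<close>

section \<open>The space l_p(Z,X)\<close>

lemma lp_norm_nonneg: "lp_norm p G \<ge> 0"
  by (simp add: lp_norm_def)

lemma lp_norm_powr:
  assumes "p > 0"
  shows "lp_norm p G powr p = (\<Sum>\<^sub>\<infinity>n. norm (G n) powr p)"
  using assms by (simp add: lp_norm_def powr_powr infsum_nonneg)

lemma lp_space_iff_bdd_sums:
  "G \<in> lp_space p \<longleftrightarrow> (\<exists>B. \<forall>S. finite S \<longrightarrow> (\<Sum>n\<in>S. norm (G n) powr p) \<le> B)"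
proof
  assume "G \<in> lp_space p"
  then show "\<exists>B. \<forall>S. finite S \<longrightarrow> (\<Sum>n\<in>S. norm (G n) powr p) \<le> B"
    by (intro exI[of _ "\<Sum>\<^sub>\<infinity>n. norm (G n) powr p"] allI impI finite_sum_le_infsum)
      (auto simp: lp_space_def)
next
  assume "\<exists>B. \<forall>S. finite S \<longrightarrow> (\<Sum>n\<in>S. norm (G n) powr p) \<le> B"
  then obtain B where "\<And>S. finite S \<Longrightarrow> (\<Sum>n\<in>S. norm (G n) powr p) \<le> B" by blast
  then have "(\<lambda>n. norm (G n) powr p) summable_on UNIV"
    by (intro nonneg_bdd_above_summable_on bdd_aboveI2) auto
  then show "G \<in> lp_space p" by (simp add: lp_space_def)
qed

lemma sum_powr_le_lp_norm:
  assumes "G \<in> lp_space p" "finite S" "p > 0"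
  shows "(\<Sum>n\<in>S. norm (G n) powr p) \<le> lp_norm p G powr p"
  unfolding lp_norm_powr[OF assms(3)]
  by (rule finite_sum_le_infsum) (use assms in \<open>auto simp: lp_space_def\<close>)

lemma lp_norm_le_if_sums_le:
  assumes "\<And>S. finite S \<Longrightarrow> (\<Sum>n\<in>S. norm (G n) powr p) \<le> e powr p" "e \<ge> 0" "p > 0"
  shows "G \<in> lp_space p" "lp_norm p G \<le> e"
proof -
  show G: "G \<in> lp_space p" using assms lp_space_iff_bdd_sums by blast
  have "(\<Sum>\<^sub>\<infinity>n. norm (G n) powr p) \<le> e powr p"
    by (rule infsum_le_finite_sums) (use G assms in \<open>auto simp: lp_space_def\<close>)
  then have "lp_norm p G \<le> (e powr p) powr (1/p)" unfolding lp_norm_def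
    using assms by (intro powr_mono2) (auto simp: infsum_nonneg)
  then show "lp_norm p G \<le> e" using assms by (simp add: powr_powr)
qed

lemma norm_le_lp_norm:
  assumes "G \<in> lp_space p" "p > 0"
  shows "norm (G n) \<le> lp_norm p G"
proof -
  have "norm (G n) = (norm (G n) powr p) powr (1/p)" using assms by (simp add: powr_powr)
  also have "\<dots> \<le> (lp_norm p G powr p) powr (1/p)"
    using sum_powr_le_lp_norm[OF assms(1) _ assms(2), of "{n}"] assms(2) by (simp add: powr_mono2)
  also have "\<dots> = lp_norm p G" using assms(2) by (simp add: powr_powr lp_norm_nonneg)
  finally show ?thesis .
qed

lemma lp_norm_eq_0_iff:
  assumes "G \<in> lp_space p" "p > 0"
  shows "lp_norm p G = 0 \<longleftrightarrow> G = (\<lambda>n. 0)"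
  using norm_le_lp_norm[OF assms] by (auto simp: lp_norm_def fun_eq_iff intro: norm_le_zero_iff[THEN iffD1])

lemma lp_space_zero: "(\<lambda>n. 0) \<in> lp_space p"
  by (simp add: lp_space_def)

lemma lp_space_scaleR:
  assumes "G \<in> lp_space p"
  shows "(\<lambda>n. c *\<^sub>R G n) \<in> lp_space p"
  using assms unfolding lp_space_def by (simp add: powr_mult summable_on_cmult_right)

lemma lp_norm_scaleR:
  assumes "p > 0"
  shows "lp_norm p (\<lambda>n. c *\<^sub>R G n) = \<bar>c\<bar> * lp_norm p G"
proof -
  have "(\<Sum>\<^sub>\<infinity>n. norm (c *\<^sub>R G n) powr p) = \<bar>c\<bar> powr p * (\<Sum>\<^sub>\<infinity>n. norm (G n) powr p)"
    by (simp add: powr_mult infsum_cmult_right')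
  then show ?thesis using assms by (simp add: lp_norm_def powr_mult powr_powr)
qed

lemma lp_norm_uminus: "lp_norm p (\<lambda>n. - G n) = lp_norm p G"
  by (simp add: lp_norm_def)

lemma lp_norm_minus_commute: "lp_norm p (\<lambda>n. G n - H n) = lp_norm p (\<lambda>n. H n - G n)"
  by (simp add: lp_norm_def norm_minus_commute)

lemma lp_space_add:
  assumes "G \<in> lp_space p" "H \<in> lp_space p" "p > 0"
  shows "(\<lambda>n. G n + H n) \<in> lp_space p"
proof -
  have "norm (G n + H n) powr p \<le> 2 powr p * (norm (G n) powr p + norm (H n) powr p)" for n
  proof -
    have "norm (G n + H n) powr p \<le> (2 * max (norm (G n)) (norm (H n))) powr p"
      using norm_triangle_ineq[of "G n" "H n"] assms(3) by (intro powr_mono2) auto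
    also have "\<dots> \<le> 2 powr p * (norm (G n) powr p + norm (H n) powr p)"
      by (auto simp: powr_mult max_def intro!: mult_left_mono)
    finally show ?thesis .
  qed
  moreover have "(\<lambda>n. 2 powr p * (norm (G n) powr p + norm (H n) powr p)) summable_on UNIV"
    using assms by (intro summable_on_cmult_right summable_on_add) (auto simp: lp_space_def)
  ultimately show ?thesis unfolding lp_space_def by (auto intro: summable_on_comparison_test)
qed

lemma lp_space_uminus: "G \<in> lp_space p \<Longrightarrow> (\<lambda>n. - G n) \<in> lp_space p"
  using lp_space_scaleR[of G p "-1"] by simp

lemma lp_space_diff:
  assumes "G \<in> lp_space p" "H \<in> lp_space p" "p > 0"
  shows "(\<lambda>n. G n - H n) \<in> lp_space p"
  using lp_space_add[OF assms(1) lp_space_uminus[OF assms(2)] assms(3)] by simp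

lemma lp_space_sum:
  assumes "finite S" "\<And>i. i \<in> S \<Longrightarrow> G i \<in> lp_space p" "p > 0"
  shows "(\<lambda>n. \<Sum>i\<in>S. G i n) \<in> lp_space p"
  using assms by (induction S rule: finite_induct) (simp_all add: lp_space_zero lp_space_add)

lemma bij_minus_int: "bij_betw (\<lambda>n::int. n - k) UNIV UNIV"
  by (rule bij_betwI[where g="\<lambda>n. n + k"]) auto

lemma lp_space_shift: "G \<in> lp_space p \<Longrightarrow> shift k G \<in> lp_space p"
  using summable_on_reindex_bij_betw[OF bij_minus_int, of "\<lambda>n. norm (G n) powr p"]
  by (simp add: lp_space_def shift_def)

lemma lp_norm_shift: "lp_norm p (shift k G) = lp_norm p G"
  using infsum_reindex_bij_betw[OF bij_minus_int, of "\<lambda>n. norm (G n) powr p"]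
  by (simp add: lp_norm_def shift_def)

definition delta :: "'a::zero \<Rightarrow> int \<Rightarrow> 'a" where
  "delta x = (\<lambda>n. if n = 0 then x else 0)"

lemma delta_in_lp: "delta x \<in> lp_space p"
proof -
  have "(\<Sum>n\<in>S. norm (delta x n) powr p) = (\<Sum>n\<in>S. if n = 0 then norm x powr p else 0)" for S
    by (intro sum.cong) (auto simp: delta_def)
  then have "(\<Sum>n\<in>S. norm (delta x n) powr p) \<le> norm x powr p" if "finite S" for S
    using that by (simp add: sum.delta)
  then show ?thesis using lp_space_iff_bdd_sums by blast
qed

lemma shift_delta: "shift m (delta x) = (\<lambda>n. if n = m then x else 0)"
  by (auto simp: shift_def delta_def)

lemma lp_norm_sum_shifted_deltas_le:
  fixes x :: "'a::real_normed_vector"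
  assumes S: "finite S" and p: "p > 0"
  shows "lp_norm p (\<lambda>n. \<Sum>k\<in>S. w k *\<^sub>R shift (-k) (delta x) n) \<le> norm x * (\<Sum>k\<in>S. \<bar>w k\<bar> powr p) powr (1/p)"
proof (rule lp_norm_le_if_sums_le(2)[OF _ _ p])
  define Q where "Q = (\<Sum>k\<in>S. \<bar>w k\<bar> powr p)"
  have Q: "Q \<ge> 0" by (simp add: Q_def sum_nonneg)
  have component: "(\<Sum>k\<in>S. w k *\<^sub>R shift (-k) (delta x) n) = (if -n \<in> S then w (-n) *\<^sub>R x else 0)" for n
  proof -
    have "(\<Sum>k\<in>S. w k *\<^sub>R shift (-k) (delta x) n) = (\<Sum>k\<in>S. if k = -n then w k *\<^sub>R x else 0)"
      unfolding shift_delta by (intro sum.cong) auto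
    also have "\<dots> = (if -n \<in> S then w (-n) *\<^sub>R x else 0)" using S by (simp add: sum.delta')
    finally show ?thesis .
  qed
  fix T :: "int set" assume T: "finite T"
  have "(\<Sum>n\<in>T. norm (\<Sum>k\<in>S. w k *\<^sub>R shift (-k) (delta x) n) powr p) =
      (\<Sum>n\<in>T. if n \<in> uminus ` S then \<bar>w (-n)\<bar> powr p * norm x powr p else 0)"
    unfolding component by (intro sum.cong refl) (auto simp: powr_mult image_iff minus_equation_iff)
  also have "\<dots> = (\<Sum>n\<in>T \<inter> uminus ` S. \<bar>w (-n)\<bar> powr p * norm x powr p)"
    using T by (simp add: sum.inter_restrict)
  also have "\<dots> \<le> (\<Sum>n\<in>uminus ` S. \<bar>w (-n)\<bar> powr p * norm x powr p)"
    using S by (intro sum_mono2) auto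
  also have "\<dots> = Q * norm x powr p"
    unfolding Q_def by (subst sum.reindex) (auto simp: inj_on_def sum_distrib_right)
  also have "\<dots> = (norm x * Q powr (1/p)) powr p"
    using Q p by (simp add: powr_mult powr_powr mult.commute)
  finally show "(\<Sum>n\<in>T. norm (\<Sum>k\<in>S. w k *\<^sub>R shift (-k) (delta x) n) powr p) \<le> (norm x * Q powr (1/p)) powr p" .
qed (simp add: sum_nonneg)

lemma finite_tail_bound:
  fixes f :: "'b \<Rightarrow> real"
  assumes "f summable_on UNIV" "\<And>n. f n \<ge> 0" "e > 0"
  obtains S where "finite S" "\<And>T. finite T \<Longrightarrow> T \<inter> S = {} \<Longrightarrow> sum f T \<le> e"
proof -
  obtain S where S: "finite S" "dist (sum f S) (\<Sum>\<^sub>\<infinity>n. f n) \<le> e"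
    using infsum_finite_approximation[OF assms(1,3)] by auto
  have "sum f T \<le> e" if "finite T" "T \<inter> S = {}" for T
  proof -
    have "sum f T + sum f S = sum f (T \<union> S)" using that S by (simp add: sum.union_disjoint)
    also have "\<dots> \<le> (\<Sum>\<^sub>\<infinity>n. f n)" using that S assms by (intro finite_sum_le_infsum) auto
    finally show ?thesis using S(2) by (simp add: dist_real_def)
  qed
  with S(1) show ?thesis by (rule that)
qed

lemma powr_convex_nonneg:
  fixes s t l p :: real
  assumes "0 \<le> s" "0 \<le> t" "0 \<le> l" "l \<le> 1" "1 \<le> p"
  shows "(l * s + (1 - l) * t) powr p \<le> l * s powr p + (1 - l) * t powr p"
proof (cases "s > 0 \<and> t > 0")
  case True
  then show ?thesis
    using convex_onD[OF powr_convex[OF assms(5)], of l t s] assms by (auto simp: algebra_simps)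
next
  case False
  have shrink: "(m * x) powr p \<le> m * x powr p" if "0 \<le> m" "m \<le> 1" "0 \<le> x" for m x :: real
  proof -
    have "m powr p \<le> m" using that powr_le_one_le[of m p] assms(5) by (cases "m = 0") auto
    then show ?thesis using that by (simp add: powr_mult mult_right_mono)
  qed
  from False assms consider "s = 0" | "t = 0" by fastforce
  then show ?thesis
    by cases (use shrink[of "1 - l" t] shrink[of l s] assms in auto)
qed

text \<open>Minkowski's inequality comes from convexity of \<open>x powr p\<close> applied pointwise to
  \<open>norm (G n + H n) / (a + b)\<close>, a convex combination of \<open>norm (G n) / a\<close> and \<open>norm (H n) / b\<close>,
  where \<open>a\<close> and \<open>b\<close> are the norms of \<open>G\<close> and \<open>H\<close>.\<close>

lemma norm_add_powr_le_convex:
  fixes u v :: "'a::real_normed_vector"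
  assumes a: "a > 0" and b: "b > 0" and p: "1 \<le> p"
  shows "norm (u + v) powr p \<le>
    (a + b) powr p * (a / (a + b) * (norm u / a) powr p + b / (a + b) * (norm v / b) powr p)"
proof -
  define l where "l = a / (a + b)"
  have l: "0 \<le> l" "l \<le> 1" "1 - l = b / (a + b)" using a b by (auto simp: l_def field_simps)
  have "(a + b) * (l * (norm u / a) + (1 - l) * (norm v / b)) = norm u + norm v"
    using a b unfolding l(3) unfolding l_def by (simp add: distrib_left)
  then have "norm (u + v) \<le> (a + b) * (l * (norm u / a) + (1 - l) * (norm v / b))"
    using norm_triangle_ineq[of u v] by simp
  then have "norm (u + v) powr p \<le> ((a + b) * (l * (norm u / a) + (1 - l) * (norm v / b))) powr p"
    using p by (intro powr_mono2) auto
  also have "\<dots> \<le> (a + b) powr p * (l * (norm u / a) powr p + (1 - l) * (norm v / b) powr p)"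
    unfolding powr_mult using a b l p by (intro mult_left_mono powr_convex_nonneg) auto
  finally show ?thesis unfolding l(3) unfolding l_def .
qed

lemma infsum_normalized_powr:
  assumes "G \<in> lp_space p" "p > 0" "lp_norm p G > 0"
  shows "(\<lambda>n. (norm (G n) / lp_norm p G) powr p) summable_on UNIV"
    and "(\<Sum>\<^sub>\<infinity>n. (norm (G n) / lp_norm p G) powr p) = 1"
proof -
  define a where "a = lp_norm p G"
  have eq: "(\<lambda>n. (norm (G n) / a) powr p) = (\<lambda>n. a powr (-p) * norm (G n) powr p)"
    using assms by (intro ext) (simp add: a_def powr_divide powr_minus field_simps)
  show "(\<lambda>n. (norm (G n) / lp_norm p G) powr p) summable_on UNIV"
    using assms(1) unfolding a_def[symmetric] eq by (auto simp: lp_space_def intro: summable_on_cmult_right)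
  have "(\<Sum>\<^sub>\<infinity>n. a powr (-p) * norm (G n) powr p) = a powr (-p) * a powr p"
    using lp_norm_powr[OF assms(2), of G] by (simp add: infsum_cmult_right' a_def)
  then show "(\<Sum>\<^sub>\<infinity>n. (norm (G n) / lp_norm p G) powr p) = 1"
    using assms(3) unfolding a_def[symmetric] eq by (simp add: powr_add[symmetric] a_def)
qed

lemma lp_norm_triangle:
  assumes G: "G \<in> lp_space p" and H: "H \<in> lp_space p" and p: "1 \<le> p"
  shows "lp_norm p (\<lambda>n. G n + H n) \<le> lp_norm p G + lp_norm p H"
proof -
  define a b where "a = lp_norm p G" and "b = lp_norm p H"
  have p_pos: "p > 0" using p by auto
  consider "a = 0" | "b = 0" | "a > 0" "b > 0"
    using lp_norm_nonneg[of p G] lp_norm_nonneg[of p H] by (fastforce simp: a_def b_def)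
  then show ?thesis
  proof cases
    case 1
    then show ?thesis using lp_norm_eq_0_iff[OF G p_pos] by (simp add: a_def lp_norm_nonneg)
  next
    case 2
    then show ?thesis using lp_norm_eq_0_iff[OF H p_pos] by (simp add: b_def lp_norm_nonneg)
  next
    case 3
    define g h where "g n = (norm (G n) / a) powr p" and "h n = (norm (H n) / b) powr p" for n
    define f where "f n = (a + b) powr p * (a / (a + b) * g n + b / (a + b) * h n)" for n
    note sG = infsum_normalized_powr[OF G p_pos 3(1)[unfolded a_def], folded a_def, folded g_def]
    note sH = infsum_normalized_powr[OF H p_pos 3(2)[unfolded b_def], folded b_def, folded h_def]
    have sf: "f summable_on UNIV" unfolding f_def
      by (intro summable_on_cmult_right summable_on_add sG(1) sH(1))
    have "(\<Sum>\<^sub>\<infinity>n. f n) = (a + b) powr p * (a / (a + b) * (\<Sum>\<^sub>\<infinity>n. g n) + b / (a + b) * (\<Sum>\<^sub>\<infinity>n. h n))"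
      unfolding f_def infsum_cmult_right'
      by (simp only: infsum_add summable_on_cmult_right sG(1) sH(1) infsum_cmult_right')
    also have "\<dots> = (a + b) powr p" using 3 sG(2) sH(2) by (simp add: add_divide_distrib[symmetric])
    finally have "(\<Sum>\<^sub>\<infinity>n. f n) = (a + b) powr p" .
    moreover have "(\<Sum>\<^sub>\<infinity>n. norm (G n + H n) powr p) \<le> (\<Sum>\<^sub>\<infinity>n. f n)"
      using lp_space_add[OF G H p_pos] norm_add_powr_le_convex[OF 3 p]
      by (intro infsum_mono[OF _ sf]) (simp_all add: lp_space_def f_def g_def h_def)
    ultimately have "(\<Sum>\<^sub>\<infinity>n. norm (G n + H n) powr p) \<le> (a + b) powr p" by simp
    then have "lp_norm p (\<lambda>n. G n + H n) \<le> ((a + b) powr p) powr (1/p)"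
      unfolding lp_norm_def using p_pos by (intro powr_mono2) (auto simp: infsum_nonneg)
    also have "\<dots> = a + b" using 3 p_pos by (simp add: powr_powr)
    finally show ?thesis by (simp add: a_def b_def)
  qed
qed

lemma lp_norm_triangle_diff:
  assumes "G \<in> lp_space p" "H \<in> lp_space p" "K \<in> lp_space p" "1 \<le> p"
  shows "lp_norm p (\<lambda>n. G n - K n) \<le> lp_norm p (\<lambda>n. G n - H n) + lp_norm p (\<lambda>n. H n - K n)"
  using lp_norm_triangle[of "\<lambda>n. G n - H n" p "\<lambda>n. H n - K n"] assms by (simp add: lp_space_diff)

lemma lp_norm_triangle_diff3:
  assumes "G \<in> lp_space p" "H \<in> lp_space p" "K \<in> lp_space p" "L \<in> lp_space p" "1 \<le> p"
  shows "lp_norm p (\<lambda>n. G n - L n) \<le>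
    lp_norm p (\<lambda>n. G n - H n) + lp_norm p (\<lambda>n. H n - K n) + lp_norm p (\<lambda>n. K n - L n)"
  using lp_norm_triangle_diff[OF assms(1,2,4,5)] lp_norm_triangle_diff[OF assms(2,3,4,5)] by linarith

lemma lp_norm_le_diff_add:
  assumes "G \<in> lp_space p" "H \<in> lp_space p" "1 \<le> p"
  shows "lp_norm p G \<le> lp_norm p (\<lambda>n. G n - H n) + lp_norm p H"
  using lp_norm_triangle[of "\<lambda>n. G n - H n" p H] assms by (simp add: lp_space_diff)

lemma lp_norm_sum_le:
  assumes "finite S" "\<And>i. i \<in> S \<Longrightarrow> G i \<in> lp_space p" "1 \<le> p"
  shows "lp_norm p (\<lambda>n. \<Sum>i\<in>S. G i n) \<le> (\<Sum>i\<in>S. lp_norm p (G i))"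
  using assms
proof (induction S rule: finite_induct)
  case (insert i S)
  have "lp_norm p (\<lambda>n. G i n + (\<Sum>j\<in>S. G j n)) \<le> lp_norm p (G i) + lp_norm p (\<lambda>n. \<Sum>j\<in>S. G j n)"
    using insert by (intro lp_norm_triangle lp_space_sum) auto
  then show ?case using insert by simp
qed (simp add: lp_norm_def)

section \<open>Completeness and the Baire category theorem\<close>

lemma lp_norm_le_pointwise_limit:
  assumes lim: "\<And>n. (\<lambda>l. G l n) \<longlonglongrightarrow> H n"
    and bound: "\<And>l. l \<ge> K \<Longrightarrow> G l \<in> lp_space p \<and> lp_norm p (G l) \<le> e"
    and "e \<ge> 0" "p > 0"
  shows "H \<in> lp_space p" "lp_norm p H \<le> e"
proof -
  have "(\<Sum>n\<in>S. norm (H n) powr p) \<le> e powr p" if S: "finite S" for S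
  proof (rule LIMSEQ_le_const2)
    show "(\<lambda>l. \<Sum>n\<in>S. norm (G l n) powr p) \<longlonglongrightarrow> (\<Sum>n\<in>S. norm (H n) powr p)"
      using \<open>p > 0\<close> by (intro tendsto_intros lim) auto
    have "(\<Sum>n\<in>S. norm (G l n) powr p) \<le> e powr p" if "l \<ge> K" for l
      using sum_powr_le_lp_norm[OF _ S \<open>p > 0\<close>, of "G l"] bound[OF that] \<open>p > 0\<close>
      by (meson lp_norm_nonneg order_trans powr_mono2 less_imp_le)
    then show "\<exists>N. \<forall>l\<ge>N. (\<Sum>n\<in>S. norm (G l n) powr p) \<le> e powr p" by blast
  qed
  then show "H \<in> lp_space p" "lp_norm p H \<le> e" using lp_norm_le_if_sums_le assms(3,4) by blast+
qed

definition lp_dist :: "real \<Rightarrow> (int \<Rightarrow> 'a::real_normed_vector) \<Rightarrow> (int \<Rightarrow> 'a) \<Rightarrow> real" where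
  "lp_dist p G H = lp_norm p (\<lambda>n. G n - H n)"

lemma Metric_space_lp:
  assumes "1 \<le> p"
  shows "Metric_space (lp_space p :: (int \<Rightarrow> 'a::real_normed_vector) set) (lp_dist p)"
proof
  fix G H K :: "int \<Rightarrow> 'a"
  show "0 \<le> lp_dist p G H" by (simp add: lp_dist_def lp_norm_nonneg)
  show "lp_dist p G H = lp_dist p H G" unfolding lp_dist_def by (rule lp_norm_minus_commute)
  show "G \<in> lp_space p \<Longrightarrow> H \<in> lp_space p \<Longrightarrow> lp_dist p G H = 0 \<longleftrightarrow> G = H"
    using lp_norm_eq_0_iff[OF lp_space_diff[of G p H]] assms by (auto simp: lp_dist_def fun_eq_iff)
  show "G \<in> lp_space p \<Longrightarrow> H \<in> lp_space p \<Longrightarrow> K \<in> lp_space p \<Longrightarrow>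
      lp_dist p G K \<le> lp_dist p G H + lp_dist p H K"
    unfolding lp_dist_def using lp_norm_triangle_diff assms by blast
qed

lemma Cauchy_component_if_lp_Cauchy:
  assumes G: "\<And>k. G k \<in> lp_space p" and "p > 0"
    and Cauchy: "\<And>e. e > 0 \<Longrightarrow> \<exists>K. \<forall>k\<ge>K. \<forall>l\<ge>K. lp_norm p (\<lambda>n. G k n - G l n) < e"
  shows "Cauchy (\<lambda>k. G k n)"
proof (rule metric_CauchyI)
  fix e :: real assume "e > 0"
  then obtain K where K: "\<forall>k\<ge>K. \<forall>l\<ge>K. lp_norm p (\<lambda>n. G k n - G l n) < e" using Cauchy by blast
  show "\<exists>K. \<forall>k\<ge>K. \<forall>l\<ge>K. dist (G k n) (G l n) < e"
  proof (intro exI allI impI)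
    fix k l assume "k \<ge> K" "l \<ge> K"
    have "norm (G k n - G l n) \<le> lp_norm p (\<lambda>n. G k n - G l n)"
      by (rule norm_le_lp_norm[OF lp_space_diff[OF G G \<open>p > 0\<close>] \<open>p > 0\<close>])
    moreover have "lp_norm p (\<lambda>n. G k n - G l n) < e" using K \<open>k \<ge> K\<close> \<open>l \<ge> K\<close> by blast
    ultimately show "dist (G k n) (G l n) < e" by (simp add: dist_norm)
  qed
qed

lemma lp_Cauchy_converges:
  fixes G :: "nat \<Rightarrow> int \<Rightarrow> 'a::banach"
  assumes G: "\<And>k. G k \<in> lp_space p" and p: "p > 0"
    and Cauchy: "\<And>e. e > 0 \<Longrightarrow> \<exists>K. \<forall>k\<ge>K. \<forall>l\<ge>K. lp_norm p (\<lambda>n. G k n - G l n) < e"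
  obtains H where "H \<in> lp_space p" "\<And>e. e > 0 \<Longrightarrow> \<exists>K. \<forall>k\<ge>K. lp_norm p (\<lambda>n. G k n - H n) < e"
proof -
  obtain H where lim: "\<And>n. (\<lambda>k. G k n) \<longlonglongrightarrow> H n"
    using Cauchy_component_if_lp_Cauchy[OF G p Cauchy]
    unfolding Cauchy_convergent_iff convergent_def by metis
  have close: "(\<lambda>n. G k n - H n) \<in> lp_space p \<and> lp_norm p (\<lambda>n. G k n - H n) \<le> e"
    if K: "\<forall>k\<ge>K. \<forall>l\<ge>K. lp_norm p (\<lambda>n. G k n - G l n) < e" and "k \<ge> K" "e > 0" for e k K
  proof -
    have "(\<lambda>n. G k n - G l n) \<in> lp_space p \<and> lp_norm p (\<lambda>n. G k n - G l n) \<le> e" if "l \<ge> K" for l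
      using \<open>k \<ge> K\<close> that K lp_space_diff[OF G G p] by (auto intro: less_imp_le)
    moreover have "(\<lambda>l. G k n - G l n) \<longlonglongrightarrow> G k n - H n" for n by (intro tendsto_intros lim)
    ultimately show ?thesis
      using lp_norm_le_pointwise_limit[of "\<lambda>l n. G k n - G l n" "\<lambda>n. G k n - H n" K p e]
        \<open>e > 0\<close> p by auto
  qed
  show ?thesis
  proof (rule that)
    obtain K1 where "\<forall>k\<ge>K1. \<forall>l\<ge>K1. lp_norm p (\<lambda>n. G k n - G l n) < 1" using Cauchy[of 1] by auto
    then have "(\<lambda>n. G K1 n - H n) \<in> lp_space p" using close[of K1 1 K1] by auto
    from lp_space_diff[OF G[of K1] this p] show "H \<in> lp_space p" by simp
  next
    fix e :: real assume "e > 0"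
    then obtain K where "\<forall>k\<ge>K. \<forall>l\<ge>K. lp_norm p (\<lambda>n. G k n - G l n) < e/2"
      using Cauchy[of "e/2"] by auto
    then show "\<exists>K. \<forall>k\<ge>K. lp_norm p (\<lambda>n. G k n - H n) < e"
      using close[of K "e/2"] \<open>e > 0\<close> by fastforce
  qed
qed

lemma mcomplete_lp:
  assumes p: "1 \<le> p"
  shows "Metric_space.mcomplete (lp_space p :: (int \<Rightarrow> 'a::banach) set) (lp_dist p)"
proof -
  interpret Metric_space "lp_space p :: (int \<Rightarrow> 'a) set" "lp_dist p" by (rule Metric_space_lp[OF p])
  show ?thesis unfolding mcomplete_def
  proof (intro allI impI)
    fix G :: "nat \<Rightarrow> int \<Rightarrow> 'a"
    assume "MCauchy G"
    then have G: "\<And>k. G k \<in> lp_space p"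
      and Cauchy: "\<And>e. e > 0 \<Longrightarrow> \<exists>K. \<forall>k\<ge>K. \<forall>l\<ge>K. lp_norm p (\<lambda>n. G k n - G l n) < e"
      unfolding MCauchy_def lp_dist_def by auto
    have "p > 0" using p by simp
    obtain H where "H \<in> lp_space p" "\<And>e. e > 0 \<Longrightarrow> \<exists>K. \<forall>k\<ge>K. lp_norm p (\<lambda>n. G k n - H n) < e"
      using lp_Cauchy_converges[OF G \<open>p > 0\<close> Cauchy] by blast
    then have "limitin mtopology G H sequentially"
      unfolding limit_metric_sequentially lp_dist_def using G by blast
    then show "\<exists>H. limitin mtopology G H sequentially" by blast
  qed
qed

lemma lp_Baire:
  fixes E :: "nat \<Rightarrow> (int \<Rightarrow> 'a::banach) set"
  assumes p: "1 \<le> p" and E: "\<And>m. E m \<subseteq> lp_space p" "(\<Union>m. E m) = lp_space p"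
  obtains m G0 r where "G0 \<in> lp_space p" "r > 0"
    "\<And>G (e::real). G \<in> lp_space p \<Longrightarrow> lp_norm p (\<lambda>n. G n - G0 n) < r \<Longrightarrow> e > 0 \<Longrightarrow>
      \<exists>H\<in>E m. lp_norm p (\<lambda>n. G n - H n) < e"
proof -
  interpret Metric_space "lp_space p :: (int \<Rightarrow> 'a) set" "lp_dist p" by (rule Metric_space_lp[OF p])
  have "\<exists>m. mtopology interior_of (mtopology closure_of E m) \<noteq> {}"
  proof (rule ccontr)
    assume "\<nexists>m. mtopology interior_of (mtopology closure_of E m) \<noteq> {}"
    then have "mtopology interior_of \<Union>(range (\<lambda>m. mtopology closure_of E m)) = {}"
      by (intro metric_Baire_category_alt mcomplete_lp[OF p]) auto
    moreover have "\<Union>(range (\<lambda>m. mtopology closure_of E m)) = lp_space p"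
    proof
      show "\<Union>(range (\<lambda>m. mtopology closure_of E m)) \<subseteq> lp_space p"
        using closure_of_subset_topspace by fastforce
      show "lp_space p \<subseteq> \<Union>(range (\<lambda>m. mtopology closure_of E m))"
        using closure_of_subset[of "E _" mtopology] E by (fastforce simp: topspace_mtopology)
    qed
    ultimately have "mtopology interior_of lp_space p = {}" by (simp only:)
    moreover have "mtopology interior_of lp_space p = lp_space p"
      using interior_of_topspace[of mtopology] unfolding topspace_mtopology .
    ultimately have "lp_space p = ({} :: (int \<Rightarrow> 'a) set)" by simp
    then show False using lp_space_zero[of p] by blast
  qed
  then obtain m G0 r where G0: "G0 \<in> lp_space p" "r > 0" "mball G0 r \<subseteq> mtopology closure_of E m"
    unfolding metric_interior_of by blast
  show ?thesis
  proof (rule that[OF G0(1,2)])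
    fix G and e :: real assume "G \<in> lp_space p" "lp_norm p (\<lambda>n. G n - G0 n) < r" "e > 0"
    then have "G \<in> mtopology closure_of E m"
      using G0 lp_norm_minus_commute[of p G0 G] by (auto simp: lp_dist_def)
    then show "\<exists>H\<in>E m. lp_norm p (\<lambda>n. G n - H n) < e"
      unfolding metric_closure_of using \<open>e > 0\<close> by (auto simp: lp_dist_def)
  qed
qed

section \<open>Zabreiko's lemma\<close>

text \<open>The assumption \<open>series\<close> is countable subadditivity: \<open>M (\<Sum>k. y k) \<le> \<Sum>k. M (y k)\<close>.\<close>

locale lp_seminorm =
  fixes p :: real and M :: "(int \<Rightarrow> 'a::banach) \<Rightarrow> real"
  assumes one_le_p: "1 \<le> p"
    and scaleR: "\<And>G c. G \<in> lp_space p \<Longrightarrow> M (\<lambda>n. c *\<^sub>R G n) = \<bar>c\<bar> * M G"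
    and subadditive: "\<And>G H. G \<in> lp_space p \<Longrightarrow> H \<in> lp_space p \<Longrightarrow> M (\<lambda>n. G n + H n) \<le> M G + M H"
    and series: "\<And>y x B. (\<And>k. y k \<in> lp_space p) \<Longrightarrow> x \<in> lp_space p \<Longrightarrow>
      (\<lambda>N. lp_norm p (\<lambda>n. x n - (\<Sum>k<N. y k n))) \<longlonglongrightarrow> 0 \<Longrightarrow> (\<And>N. (\<Sum>k<N. M (y k)) \<le> B) \<Longrightarrow> M x \<le> B"
begin

lemma p_pos: "p > 0"
  using one_le_p by simp

lemma uminus_invariant: "G \<in> lp_space p \<Longrightarrow> M (\<lambda>n. - G n) = M G"
  using scaleR[of G "-1"] by simp

text \<open>By Baire, the closure of some sublevel set \<open>{M \<le> m}\<close> contains a ball; differences of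
  approximants of its centre and of a point shifted by \<open>y\<close> then approximate every small \<open>y\<close>.\<close>

lemma sublevel_dense_near_zero:
  obtains C r where "C \<ge> 0" "r > 0" "\<And>y e. y \<in> lp_space p \<Longrightarrow> lp_norm p y < r \<Longrightarrow> e > 0 \<Longrightarrow>
    \<exists>z\<in>lp_space p. M z \<le> C \<and> lp_norm p (\<lambda>n. y n - z n) < e"
proof -
  define E where "E m = {G \<in> lp_space p. M G \<le> real m}" for m :: nat
  have "G \<in> E (nat \<lceil>M G\<rceil>)" if "G \<in> lp_space p" for G
    using that real_nat_ceiling_ge by (auto simp: E_def)
  then have "(\<Union>m. E m) = lp_space p" by (auto simp: E_def)
  then obtain m G0 r where G0: "G0 \<in> lp_space p" "r > 0"
    and dense: "\<And>G e. G \<in> lp_space p \<Longrightarrow> lp_norm p (\<lambda>n. G n - G0 n) < r \<Longrightarrow> e > 0 \<Longrightarrow>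
      \<exists>H\<in>E m. lp_norm p (\<lambda>n. G n - H n) < e"
    by (rule lp_Baire[OF one_le_p, of E, rotated]) (auto simp: E_def)
  show ?thesis
  proof (rule that[where C = "2 * real m", OF _ G0(2)])
    show "2 * real m \<ge> 0" by simp
  next
    fix y :: "int \<Rightarrow> 'a" and e :: real
    assume y: "y \<in> lp_space p" "lp_norm p y < r" and "e > 0"
    have G0y: "(\<lambda>n. G0 n + y n) \<in> lp_space p" by (rule lp_space_add[OF G0(1) y(1) p_pos])
    obtain u where u: "u \<in> E m" "lp_norm p (\<lambda>n. (G0 n + y n) - u n) < e/2"
      using dense[OF G0y _ half_gt_zero[OF \<open>e > 0\<close>]] y by auto
    obtain v where v: "v \<in> E m" "lp_norm p (\<lambda>n. G0 n - v n) < e/2"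
      using dense[OF G0(1) _ half_gt_zero[OF \<open>e > 0\<close>]] G0(2) by (auto simp: lp_norm_def)
    have uv: "u \<in> lp_space p" "v \<in> lp_space p" using u v by (auto simp: E_def)
    have "M (\<lambda>n. u n - v n) \<le> M u + M v"
      using subadditive[OF uv(1) lp_space_uminus[OF uv(2)]] uminus_invariant[OF uv(2)] by simp
    also have "\<dots> \<le> 2 * real m" using u v by (auto simp: E_def)
    finally have "M (\<lambda>n. u n - v n) \<le> 2 * real m" .
    have "lp_norm p (\<lambda>n. ((G0 n + y n) - u n) + - (G0 n - v n)) \<le>
        lp_norm p (\<lambda>n. (G0 n + y n) - u n) + lp_norm p (\<lambda>n. - (G0 n - v n))"
      using G0 G0y uv by (intro lp_norm_triangle one_le_p lp_space_diff lp_space_uminus p_pos)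
    then have "lp_norm p (\<lambda>n. y n - (u n - v n)) < e"
      using u(2) v(2) by (simp add: lp_norm_uminus[of p "\<lambda>n. G0 n - v n", simplified] algebra_simps)
    then show "\<exists>z\<in>lp_space p. M z \<le> 2 * real m \<and> lp_norm p (\<lambda>n. y n - z n) < e"
      using lp_space_diff[OF uv p_pos] \<open>M (\<lambda>n. u n - v n) \<le> 2 * real m\<close> by blast
  qed
qed

lemma sublevel_dense_scaled:
  obtains C r where "C \<ge> 0" "r > 0" "\<And>y t e. y \<in> lp_space p \<Longrightarrow> t > 0 \<Longrightarrow> lp_norm p y < r * t \<Longrightarrow> e > 0 \<Longrightarrow>
    \<exists>z\<in>lp_space p. M z \<le> C * t \<and> lp_norm p (\<lambda>n. y n - z n) < e"
proof -
  obtain C r where C: "C \<ge> 0" "r > 0" and dense: "\<And>y e. y \<in> lp_space p \<Longrightarrow> lp_norm p y < r \<Longrightarrow> e > 0 \<Longrightarrow>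
      \<exists>z\<in>lp_space p. M z \<le> C \<and> lp_norm p (\<lambda>n. y n - z n) < e"
    using sublevel_dense_near_zero by blast
  show ?thesis
  proof (rule that[OF C])
    fix y :: "int \<Rightarrow> 'a" and t e :: real
    assume y: "y \<in> lp_space p" and t: "t > 0" "lp_norm p y < r * t" and "e > 0"
    have "lp_norm p (\<lambda>n. (1/t) *\<^sub>R y n) < r"
      using t by (simp add: lp_norm_scaleR[OF p_pos] pos_divide_less_eq)
    then obtain z where z: "z \<in> lp_space p" "M z \<le> C" "lp_norm p (\<lambda>n. (1/t) *\<^sub>R y n - z n) < e / t"
      using dense[OF lp_space_scaleR[OF y]] \<open>e > 0\<close> t by (meson divide_pos_pos)
    have "lp_norm p (\<lambda>n. y n - t *\<^sub>R z n) = lp_norm p (\<lambda>n. t *\<^sub>R ((1/t) *\<^sub>R y n - z n))"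
      using t by (simp add: algebra_simps)
    also have "\<dots> = t * lp_norm p (\<lambda>n. (1/t) *\<^sub>R y n - z n)"
      using t by (simp only: lp_norm_scaleR[OF p_pos] abs_of_pos)
    also have "\<dots> < e" using z t by (simp add: field_simps)
    finally show "\<exists>z\<in>lp_space p. M z \<le> C * t \<and> lp_norm p (\<lambda>n. y n - z n) < e"
      using z t scaleR[OF z(1), of t]
      by (intro bexI[of _ "\<lambda>n. t *\<^sub>R z n"]) (auto simp: lp_space_scaleR mult.commute)
  qed
qed

lemma sum_divide_power_two: "(\<Sum>k<N. c / 2 ^ k) = 2 * c - 2 * c / 2 ^ N" for c :: real
  by (induction N) (auto simp: field_simps)

text \<open>A point of a small ball is the sum of a series of approximants from the scaled sublevel
  sets, at the scales \<open>1 / 2 ^ k\<close>.\<close>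

lemma bounded_on_ball:
  obtains C r where "r > 0" "\<And>y. y \<in> lp_space p \<Longrightarrow> lp_norm p y < r \<Longrightarrow> M y \<le> 2 * C"
proof -
  obtain C r where C: "C \<ge> 0" "r > 0" and dense: "\<And>y t e. y \<in> lp_space p \<Longrightarrow> t > 0 \<Longrightarrow>
      lp_norm p y < r * t \<Longrightarrow> e > 0 \<Longrightarrow> \<exists>z\<in>lp_space p. M z \<le> C * t \<and> lp_norm p (\<lambda>n. y n - z n) < e"
    using sublevel_dense_scaled by blast
  have "\<forall>k w. \<exists>z. w \<in> lp_space p \<and> lp_norm p w < r / 2^k \<longrightarrow>
      z \<in> lp_space p \<and> M z \<le> C / 2^k \<and> lp_norm p (\<lambda>n. w n - z n) < r / 2^Suc k"
  proof (intro allI)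
    fix k w
    show "\<exists>z. w \<in> lp_space p \<and> lp_norm p w < r / 2^k \<longrightarrow>
      z \<in> lp_space p \<and> M z \<le> C / 2^k \<and> lp_norm p (\<lambda>n. w n - z n) < r / 2^Suc k"
      using dense[of w "1 / 2^k" "r / 2^Suc k"] C by (auto simp: field_simps)
  qed
  then obtain Z where Z: "\<And>k w. w \<in> lp_space p \<Longrightarrow> lp_norm p w < r / 2^k \<Longrightarrow>
      Z k w \<in> lp_space p \<and> M (Z k w) \<le> C / 2^k \<and> lp_norm p (\<lambda>n. w n - Z k w n) < r / 2^Suc k"
    by metis
  show ?thesis
  proof (rule that[OF C(2)])
    fix y :: "int \<Rightarrow> 'a" assume y: "y \<in> lp_space p" "lp_norm p y < r"
    define W where "W = rec_nat y (\<lambda>k w n. w n - Z k w n)"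
    have W_Suc: "W (Suc k) = (\<lambda>n. W k n - Z k (W k) n)" for k by (simp add: W_def)
    have W: "W k \<in> lp_space p \<and> lp_norm p (W k) < r / 2^k \<and> W k = (\<lambda>n. y n - (\<Sum>j<k. Z j (W j) n))" for k
    proof (induction k)
      case (Suc k)
      then have Zk: "Z k (W k) \<in> lp_space p" "lp_norm p (\<lambda>n. W k n - Z k (W k) n) < r / 2^Suc k"
        using Z by blast+
      have "W (Suc k) \<in> lp_space p" unfolding W_Suc using Suc Zk by (intro lp_space_diff p_pos) auto
      moreover have "W (Suc k) = (\<lambda>n. y n - (\<Sum>j<Suc k. Z j (W j) n))"
        unfolding W_Suc by (subst (1) Suc.IH[THEN conjunct2, THEN conjunct2]) (simp add: algebra_simps)
      ultimately show ?case using Zk(2) W_Suc by simp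
    qed (use y in \<open>simp add: W_def\<close>)
    show "M y \<le> 2 * C"
    proof (rule series[of "\<lambda>k. Z k (W k)" y])
      show "Z k (W k) \<in> lp_space p" for k using Z W by blast
      show "(\<lambda>N. lp_norm p (\<lambda>n. y n - (\<Sum>k<N. Z k (W k) n))) \<longlonglongrightarrow> 0"
      proof (rule tendsto_sandwich[of "\<lambda>N. 0" _ _ "\<lambda>N. r / 2^N"])
        show "\<forall>\<^sub>F N in sequentially. lp_norm p (\<lambda>n. y n - (\<Sum>k<N. Z k (W k) n)) \<le> r / 2^N"
          using W by (intro always_eventually allI) (metis less_imp_le)
      qed (auto simp: lp_norm_nonneg intro: LIMSEQ_divide_realpow_zero)
      show "(\<Sum>k<N. M (Z k (W k))) \<le> 2 * C" for N
      proof -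
        have "(\<Sum>k<N. M (Z k (W k))) \<le> (\<Sum>k<N. C / 2^k)" using Z W by (intro sum_mono) blast
        also have "\<dots> \<le> 2 * C" using C(1) by (simp add: sum_divide_power_two)
        finally show ?thesis .
      qed
    qed (rule y)
  qed
qed

lemma bounded: "\<exists>C. \<forall>G\<in>lp_space p. M G \<le> C * lp_norm p G"
proof -
  obtain C r where r: "r > 0" and ball: "\<And>y. y \<in> lp_space p \<Longrightarrow> lp_norm p y < r \<Longrightarrow> M y \<le> 2 * C"
    using bounded_on_ball by blast
  have "M G \<le> (4 * C / r) * lp_norm p G" if G: "G \<in> lp_space p" for G
  proof (cases "lp_norm p G = 0")
    case True
    then show ?thesis using lp_norm_eq_0_iff[OF G p_pos] scaleR[OF G, of 0] by simp
  next
    case False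
    define t where "t = lp_norm p G"
    have t: "t > 0" using False lp_norm_nonneg[of p G] by (simp add: t_def)
    have "lp_norm p (\<lambda>n. (r / (2 * t)) *\<^sub>R G n) = r / 2"
      using t r by (simp add: lp_norm_scaleR[OF p_pos] t_def[symmetric])
    then have "M (\<lambda>n. (r / (2 * t)) *\<^sub>R G n) \<le> 2 * C"
      using r by (intro ball lp_space_scaleR G) auto
    then have "r / (2 * t) * M G \<le> 2 * C" using scaleR[OF G, of "r / (2 * t)"] t r by simp
    then show ?thesis using t r unfolding t_def[symmetric] by (simp add: field_simps)
  qed
  then show ?thesis by blast
qed

end

section \<open>Finite-dimensional subspaces\<close>

lemma abs_scaleR_infdist_span_le:
  fixes a :: "'a::real_normed_vector"
  assumes "v \<in> span B"
  shows "\<bar>t\<bar> * infdist a (span B) \<le> norm (v + t *\<^sub>R a)"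
proof (cases "t = 0")
  case False
  have "infdist a (span B) \<le> dist a (- (1/t) *\<^sub>R v)" by (intro infdist_le span_scale assms)
  also have "\<dots> = norm (v + t *\<^sub>R a) / \<bar>t\<bar>"
    using False by (simp add: dist_norm norm_minus_commute[of a] field_simps flip: norm_scaleR)
  finally show ?thesis using False by (simp add: field_simps)
qed simp

lemma closed_span_finite:
  fixes B :: "'a::real_normed_vector set"
  assumes "finite B"
  shows "closed (span B)"
  using assms
proof (induction B rule: finite_induct)
  case (insert a B)
  show ?case
  proof (cases "a \<in> span B")
    case True
    then show ?thesis by (simp add: span_redundant insert.IH)
  next
    case False
    define d where "d = infdist a (span B)"
    have d: "d > 0" unfolding d_def
      by (rule infdist_pos_not_in_closed[OF insert.IH]) (use False span_zero in auto)
    show ?thesis unfolding closed_sequential_limits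
    proof (intro allI impI, elim conjE)
      fix z l assume z: "\<forall>n. z n \<in> span (insert a B)" and "z \<longlonglongrightarrow> l"
      obtain t where t: "\<And>n. z n - t n *\<^sub>R a \<in> span B"
        using z by (simp add: span_insert) metis
      text \<open>The coefficients along \<open>a\<close> are Cauchy, since \<open>a\<close> stays at distance \<open>d\<close> from \<open>span B\<close>.\<close>
      have "Cauchy t"
      proof (rule metric_CauchyI)
        fix r :: real assume "r > 0"
        then obtain M where M: "\<And>m n. m \<ge> M \<Longrightarrow> n \<ge> M \<Longrightarrow> dist (z m) (z n) < r * d"
          using LIMSEQ_imp_Cauchy[OF \<open>z \<longlonglongrightarrow> l\<close>] d by (meson metric_CauchyD mult_pos_pos)
        have "dist (t m) (t n) < r" if "m \<ge> M" "n \<ge> M" for m n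
        proof -
          have "\<bar>t m - t n\<bar> * d \<le> norm ((z m - t m *\<^sub>R a) - (z n - t n *\<^sub>R a) + (t m - t n) *\<^sub>R a)"
            unfolding d_def by (intro abs_scaleR_infdist_span_le span_diff t)
          also have "\<dots> < r * d" using M[OF that] by (simp add: dist_norm algebra_simps)
          finally show ?thesis using d by (simp add: dist_real_def)
        qed
        then show "\<exists>M. \<forall>m\<ge>M. \<forall>n\<ge>M. dist (t m) (t n) < r" by blast
      qed
      then obtain \<tau> where "t \<longlonglongrightarrow> \<tau>" using Cauchy_convergent_iff convergent_def by blast
      then have "(\<lambda>n. z n - t n *\<^sub>R a) \<longlonglongrightarrow> l - \<tau> *\<^sub>R a" by (intro tendsto_intros \<open>z \<longlonglongrightarrow> l\<close>)
      moreover have "\<And>w m. (\<forall>n. w n \<in> span B) \<Longrightarrow> w \<longlonglongrightarrow> m \<Longrightarrow> m \<in> span B"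
        using insert.IH unfolding closed_sequential_limits by blast
      ultimately have "l - \<tau> *\<^sub>R a \<in> span B" using t by presburger
      then show "l \<in> span (insert a B)" by (auto simp: span_insert)
    qed
  qed
qed simp

lemma exists_far_from_finite_span:
  fixes B :: "'a::real_normed_vector set"
  assumes "finite B" "span B \<noteq> UNIV"
  obtains x where "x \<noteq> 0" "\<And>v. v \<in> span B \<Longrightarrow> norm (x - v) > norm x / 2"
proof -
  obtain y where y: "y \<notin> span B" using assms(2) by blast
  define d where "d = infdist y (span B)"
  have d: "d > 0" unfolding d_def
    by (rule infdist_pos_not_in_closed[OF closed_span_finite[OF assms(1)]]) (use y span_zero in auto)
  have "\<not> (\<forall>v\<in>span B. 2 * d \<le> dist y v)"
  proof
    assume "\<forall>v\<in>span B. 2 * d \<le> dist y v"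
    moreover have "span B \<noteq> {}" using span_zero by blast
    ultimately have "2 * d \<le> (INF v\<in>span B. dist y v)" by (intro cINF_greatest) auto
    then have "2 * d \<le> d" using \<open>span B \<noteq> {}\<close> by (simp add: d_def infdist_def)
    then show False using d by simp
  qed
  then obtain v0 where v0: "v0 \<in> span B" "dist y v0 < 2 * d" by (auto simp: not_le)
  have far: "norm (y - v0 - v) \<ge> d" if "v \<in> span B" for v
    using infdist_le[OF span_add[OF v0(1) that], of y] by (simp add: d_def dist_norm algebra_simps)
  show ?thesis
  proof (rule that)
    show "y - v0 \<noteq> 0" using far[OF span_zero] d by auto
    show "norm (y - v0 - v) > norm (y - v0) / 2" if "v \<in> span B" for v
      using far[OF that] v0(2) by (simp add: dist_norm)
  qed
qed

section \<open>Schauder bases of shifts\<close>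

lemma le_of_tendsto_add:
  fixes x B :: real
  assumes "\<And>K. x \<le> f K + B" "f \<longlonglongrightarrow> 0"
  shows "x \<le> B"
proof -
  have "(\<lambda>K. f K + B) \<longlonglongrightarrow> 0 + B" by (intro tendsto_intros assms)
  then show ?thesis using assms(1) by (intro LIMSEQ_le_const[of "\<lambda>K. f K + B"]) auto
qed

locale shift_basis =
  fixes p :: real and F :: "int \<Rightarrow> 'a::banach" and \<sigma> :: "nat \<Rightarrow> int"
  assumes one_le_p: "1 \<le> p" and F: "F \<in> lp_space p" and bij: "bij \<sigma>"
    and basis: "lp_schauder_basis p (\<lambda>i. shift (\<sigma> i) F)"
begin

definition basis_vec :: "nat \<Rightarrow> int \<Rightarrow> 'a" where
  "basis_vec i = shift (\<sigma> i) F"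

definition partial_sum :: "(nat \<Rightarrow> real) \<Rightarrow> nat \<Rightarrow> int \<Rightarrow> 'a" where
  "partial_sum a N = (\<lambda>n. \<Sum>i<N. a i *\<^sub>R basis_vec i n)"

definition coeffs :: "(int \<Rightarrow> 'a) \<Rightarrow> nat \<Rightarrow> real" where
  "coeffs G = (THE a. lp_expansion p basis_vec a G)"

lemma p_pos: "p > 0"
  using one_le_p by simp

lemma basis_vec_in_lp: "basis_vec i \<in> lp_space p"
  unfolding basis_vec_def by (rule lp_space_shift[OF F])

lemma lp_norm_basis_vec: "lp_norm p (basis_vec i) = lp_norm p F"
  unfolding basis_vec_def by (rule lp_norm_shift)

lemma partial_sum_in_lp: "partial_sum a N \<in> lp_space p"
  unfolding partial_sum_def by (intro lp_space_sum lp_space_scaleR basis_vec_in_lp p_pos) auto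

lemma lp_expansion_iff:
  "lp_expansion p basis_vec a G \<longleftrightarrow> (\<lambda>N. lp_norm p (\<lambda>n. G n - partial_sum a N n)) \<longlonglongrightarrow> 0"
  unfolding lp_expansion_def partial_sum_def ..

lemma ex1_lp_expansion: "G \<in> lp_space p \<Longrightarrow> \<exists>!a. lp_expansion p basis_vec a G"
  using basis unfolding lp_schauder_basis_def basis_vec_def[abs_def] by blast

lemma lp_expansion_coeffs: "G \<in> lp_space p \<Longrightarrow> lp_expansion p basis_vec (coeffs G) G"
  unfolding coeffs_def by (rule theI'[OF ex1_lp_expansion])

lemma coeffs_eqI: "G \<in> lp_space p \<Longrightarrow> lp_expansion p basis_vec a G \<Longrightarrow> coeffs G = a"
  unfolding coeffs_def by (rule the1_equality[OF ex1_lp_expansion])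

lemma partial_sum_add: "partial_sum (\<lambda>i. a i + b i) N = (\<lambda>n. partial_sum a N n + partial_sum b N n)"
  by (simp add: partial_sum_def scaleR_add_left sum.distrib)

lemma partial_sum_scaleR: "partial_sum (\<lambda>i. c * a i) N = (\<lambda>n. c *\<^sub>R partial_sum a N n)"
  by (simp add: partial_sum_def scaleR_sum_right)

lemma partial_sum_diff: "partial_sum (\<lambda>i. a i - b i) N = (\<lambda>n. partial_sum a N n - partial_sum b N n)"
  by (simp add: partial_sum_def scaleR_diff_left sum_subtractf)

lemma partial_sum_sum: "partial_sum (\<lambda>i. \<Sum>k\<in>S. a k i) N = (\<lambda>n. \<Sum>k\<in>S. partial_sum (a k) N n)"
  unfolding partial_sum_def by (rule ext) (simp add: scaleR_sum_left sum.swap[of _ S])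

lemma lp_expansion_add:
  assumes "G \<in> lp_space p" "H \<in> lp_space p" "lp_expansion p basis_vec a G" "lp_expansion p basis_vec b H"
  shows "lp_expansion p basis_vec (\<lambda>i. a i + b i) (\<lambda>n. G n + H n)"
  unfolding lp_expansion_iff partial_sum_add
proof (rule tendsto_sandwich[of "\<lambda>N. 0" _ _
    "\<lambda>N. lp_norm p (\<lambda>n. G n - partial_sum a N n) + lp_norm p (\<lambda>n. H n - partial_sum b N n)"])
  have "lp_norm p (\<lambda>n. G n + H n - (partial_sum a N n + partial_sum b N n)) \<le>
      lp_norm p (\<lambda>n. G n - partial_sum a N n) + lp_norm p (\<lambda>n. H n - partial_sum b N n)" for N
    using lp_norm_triangle[of "\<lambda>n. G n - partial_sum a N n" p "\<lambda>n. H n - partial_sum b N n"] assms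
    by (simp add: lp_space_diff partial_sum_in_lp p_pos one_le_p algebra_simps)
  then show "\<forall>\<^sub>F N in sequentially. lp_norm p (\<lambda>n. G n + H n - (partial_sum a N n + partial_sum b N n)) \<le>
      lp_norm p (\<lambda>n. G n - partial_sum a N n) + lp_norm p (\<lambda>n. H n - partial_sum b N n)"
    by simp
  show "(\<lambda>N. lp_norm p (\<lambda>n. G n - partial_sum a N n) + lp_norm p (\<lambda>n. H n - partial_sum b N n)) \<longlonglongrightarrow> 0"
    using tendsto_add[OF assms(3,4)[unfolded lp_expansion_iff]] by simp
qed (auto simp: lp_norm_nonneg)

lemma lp_expansion_scaleR:
  assumes "lp_expansion p basis_vec a G"
  shows "lp_expansion p basis_vec (\<lambda>i. c * a i) (\<lambda>n. c *\<^sub>R G n)"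
proof -
  have "lp_norm p (\<lambda>n. c *\<^sub>R G n - partial_sum (\<lambda>i. c * a i) N n) =
      \<bar>c\<bar> * lp_norm p (\<lambda>n. G n - partial_sum a N n)" for N
    unfolding partial_sum_scaleR using lp_norm_scaleR[OF p_pos, of c "\<lambda>n. G n - partial_sum a N n"]
    by (simp add: scaleR_diff_right)
  moreover have "(\<lambda>N. \<bar>c\<bar> * lp_norm p (\<lambda>n. G n - partial_sum a N n)) \<longlonglongrightarrow> \<bar>c\<bar> * 0"
    using assms unfolding lp_expansion_iff by (intro tendsto_intros)
  ultimately show ?thesis unfolding lp_expansion_iff by simp
qed

lemma coeffs_add:
  "G \<in> lp_space p \<Longrightarrow> H \<in> lp_space p \<Longrightarrow> coeffs (\<lambda>n. G n + H n) = (\<lambda>i. coeffs G i + coeffs H i)"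
  by (rule coeffs_eqI[OF lp_space_add[OF _ _ p_pos] lp_expansion_add[OF _ _ lp_expansion_coeffs lp_expansion_coeffs]])

lemma coeffs_scaleR: "G \<in> lp_space p \<Longrightarrow> coeffs (\<lambda>n. c *\<^sub>R G n) = (\<lambda>i. c * coeffs G i)"
  by (rule coeffs_eqI[OF lp_space_scaleR lp_expansion_scaleR[OF lp_expansion_coeffs]])

lemma coeffs_diff:
  "G \<in> lp_space p \<Longrightarrow> H \<in> lp_space p \<Longrightarrow> coeffs (\<lambda>n. G n - H n) = (\<lambda>i. coeffs G i - coeffs H i)"
  using coeffs_add[of G "\<lambda>n. (-1) *\<^sub>R H n"] coeffs_scaleR[of H "-1"] lp_space_scaleR[of H p "-1"] by simp

lemma coeffs_sum:
  assumes "finite S" "\<And>k. k \<in> S \<Longrightarrow> G k \<in> lp_space p"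
  shows "coeffs (\<lambda>n. \<Sum>k\<in>S. G k n) = (\<lambda>i. \<Sum>k\<in>S. coeffs (G k) i)"
  using assms
proof (induction S rule: finite_induct)
  case empty
  show ?case using coeffs_scaleR[OF lp_space_zero, of 0] by simp
qed (simp add: coeffs_add lp_space_sum p_pos)

lemma coeffs_finite_combination:
  assumes S: "finite S"
  shows "coeffs (\<lambda>n. \<Sum>i\<in>S. c i *\<^sub>R basis_vec i n) = (\<lambda>i. if i \<in> S then c i else 0)"
proof (rule coeffs_eqI)
  show "(\<lambda>n. \<Sum>i\<in>S. c i *\<^sub>R basis_vec i n) \<in> lp_space p"
    by (intro lp_space_sum lp_space_scaleR basis_vec_in_lp p_pos S)
  obtain N0 where N0: "S \<subseteq> {..<N0}" using S finite_nat_iff_bounded by auto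
  have "partial_sum (\<lambda>i. if i \<in> S then c i else 0) N = (\<lambda>n. \<Sum>i\<in>S. c i *\<^sub>R basis_vec i n)"
    if "N \<ge> N0" for N
  proof
    fix n
    have "partial_sum (\<lambda>i. if i \<in> S then c i else 0) N n = (\<Sum>i\<in>{..<N} \<inter> S. c i *\<^sub>R basis_vec i n)"
      unfolding partial_sum_def sum.inter_restrict[OF finite_lessThan] by (intro sum.cong) auto
    also have "{..<N} \<inter> S = S" using N0 that by auto
    finally show "partial_sum (\<lambda>i. if i \<in> S then c i else 0) N n = (\<Sum>i\<in>S. c i *\<^sub>R basis_vec i n)" .
  qed
  then show "lp_expansion p basis_vec (\<lambda>i. if i \<in> S then c i else 0) (\<lambda>n. \<Sum>i\<in>S. c i *\<^sub>R basis_vec i n)"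
    unfolding lp_expansion_iff by (intro LIMSEQ_I exI[of _ N0]) (auto simp: lp_norm_def)
qed

lemma lp_norm_F_pos: "lp_norm p F > 0"
proof (rule ccontr)
  assume "\<not> lp_norm p F > 0"
  then have "F n = 0" for n using lp_norm_eq_0_iff[OF F p_pos] lp_norm_nonneg[of p F] by simp
  then have "basis_vec i = (\<lambda>n. 0)" for i by (simp add: basis_vec_def shift_def)
  then have "lp_expansion p basis_vec a (\<lambda>n. 0)" for a
    by (simp add: lp_expansion_iff partial_sum_def lp_norm_def)
  then have "(\<lambda>i. 0) = (\<lambda>i::nat. 1::real)" using ex1_lp_expansion[OF lp_space_zero] by blast
  then show False by (metis zero_neq_one)
qed

lemma abs_coeff_le_partial_sums:
  "\<bar>a i\<bar> * lp_norm p F \<le> lp_norm p (partial_sum a (Suc i)) + lp_norm p (partial_sum a i)"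
proof -
  have "\<bar>a i\<bar> * lp_norm p F = lp_norm p (\<lambda>n. partial_sum a (Suc i) n - partial_sum a i n)"
    using lp_norm_scaleR[OF p_pos, of "a i" "basis_vec i"] by (simp add: partial_sum_def lp_norm_basis_vec)
  also have "\<dots> \<le> lp_norm p (partial_sum a (Suc i)) + lp_norm p (partial_sum a i)"
    using lp_norm_triangle[OF partial_sum_in_lp lp_space_uminus[OF partial_sum_in_lp] one_le_p]
    by (simp add: lp_norm_uminus)
  finally show ?thesis .
qed

lemma lp_norm_partial_sum_diff_le:
  "lp_norm p (\<lambda>n. partial_sum a N n - partial_sum b N n) \<le> (\<Sum>i<N. \<bar>a i - b i\<bar>) * lp_norm p F"
proof -
  have "lp_norm p (\<lambda>n. partial_sum a N n - partial_sum b N n) =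
      lp_norm p (\<lambda>n. \<Sum>i<N. (a i - b i) *\<^sub>R basis_vec i n)"
    by (simp add: partial_sum_def scaleR_diff_left sum_subtractf)
  also have "\<dots> \<le> (\<Sum>i<N. lp_norm p (\<lambda>n. (a i - b i) *\<^sub>R basis_vec i n))"
    by (intro lp_norm_sum_le lp_space_scaleR basis_vec_in_lp one_le_p) auto
  also have "\<dots> = (\<Sum>i<N. \<bar>a i - b i\<bar>) * lp_norm p F"
    by (simp add: lp_norm_scaleR[OF p_pos] lp_norm_basis_vec sum_distrib_right)
  finally show ?thesis .
qed

definition basis_norm :: "(int \<Rightarrow> 'a) \<Rightarrow> real" where
  "basis_norm G = (SUP N. lp_norm p (partial_sum (coeffs G) N))"

lemma bdd_above_partial_sums:
  assumes G: "G \<in> lp_space p"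
  shows "bdd_above (range (\<lambda>N. lp_norm p (partial_sum (coeffs G) N)))"
proof -
  have "convergent (\<lambda>N. lp_norm p (\<lambda>n. G n - partial_sum (coeffs G) N n))"
    using lp_expansion_coeffs[OF G] unfolding lp_expansion_iff by (rule convergentI)
  then have "Bseq (\<lambda>N. lp_norm p (\<lambda>n. G n - partial_sum (coeffs G) N n))" by (rule convergent_imp_Bseq)
  then obtain K where K: "\<And>N. norm (lp_norm p (\<lambda>n. G n - partial_sum (coeffs G) N n)) \<le> K"
    unfolding Bseq_def by blast
  have "lp_norm p (partial_sum (coeffs G) N) \<le> K + lp_norm p G" for N
    using lp_norm_le_diff_add[OF partial_sum_in_lp G one_le_p, of "coeffs G" N] K[of N]
    by (simp add: lp_norm_minus_commute)
  then show ?thesis by (intro bdd_aboveI2) auto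
qed

lemma lp_norm_partial_sum_le_basis_norm:
  "G \<in> lp_space p \<Longrightarrow> lp_norm p (partial_sum (coeffs G) N) \<le> basis_norm G"
  unfolding basis_norm_def by (rule cSUP_upper[OF _ bdd_above_partial_sums]) auto

lemma basis_norm_leI: "(\<And>N. lp_norm p (partial_sum (coeffs G) N) \<le> B) \<Longrightarrow> basis_norm G \<le> B"
  unfolding basis_norm_def by (rule cSUP_least) auto

lemma basis_norm_nonneg: "G \<in> lp_space p \<Longrightarrow> basis_norm G \<ge> 0"
  using lp_norm_partial_sum_le_basis_norm[of G 0] lp_norm_nonneg[of p] by (meson order_trans)

lemma basis_norm_scaleR_le:
  assumes G: "G \<in> lp_space p"
  shows "basis_norm (\<lambda>n. c *\<^sub>R G n) \<le> \<bar>c\<bar> * basis_norm G"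
proof (rule basis_norm_leI)
  fix N
  have "lp_norm p (partial_sum (coeffs (\<lambda>n. c *\<^sub>R G n)) N) = \<bar>c\<bar> * lp_norm p (partial_sum (coeffs G) N)"
    unfolding coeffs_scaleR[OF G] partial_sum_scaleR by (rule lp_norm_scaleR[OF p_pos])
  also have "\<dots> \<le> \<bar>c\<bar> * basis_norm G"
    by (intro mult_left_mono lp_norm_partial_sum_le_basis_norm G) auto
  finally show "lp_norm p (partial_sum (coeffs (\<lambda>n. c *\<^sub>R G n)) N) \<le> \<bar>c\<bar> * basis_norm G" .
qed

lemma basis_norm_scaleR:
  assumes G: "G \<in> lp_space p"
  shows "basis_norm (\<lambda>n. c *\<^sub>R G n) = \<bar>c\<bar> * basis_norm G"
proof (cases "c = 0")
  case True
  then show ?thesis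
    using basis_norm_scaleR_le[OF G, of 0] basis_norm_nonneg[OF lp_space_scaleR[OF G, of 0]] by simp
next
  case False
  have "basis_norm (\<lambda>n. (1/c) *\<^sub>R (c *\<^sub>R G n)) \<le> \<bar>1/c\<bar> * basis_norm (\<lambda>n. c *\<^sub>R G n)"
    by (rule basis_norm_scaleR_le[OF lp_space_scaleR[OF G]])
  then have "\<bar>c\<bar> * basis_norm G \<le> basis_norm (\<lambda>n. c *\<^sub>R G n)" using False by (simp add: field_simps)
  then show ?thesis using basis_norm_scaleR_le[OF G, of c] by simp
qed

lemma basis_norm_add:
  assumes G: "G \<in> lp_space p" and H: "H \<in> lp_space p"
  shows "basis_norm (\<lambda>n. G n + H n) \<le> basis_norm G + basis_norm H"
proof (rule basis_norm_leI)
  fix N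
  have "lp_norm p (partial_sum (coeffs (\<lambda>n. G n + H n)) N) =
      lp_norm p (\<lambda>n. partial_sum (coeffs G) N n + partial_sum (coeffs H) N n)"
    unfolding coeffs_add[OF G H] partial_sum_add ..
  also have "\<dots> \<le> lp_norm p (partial_sum (coeffs G) N) + lp_norm p (partial_sum (coeffs H) N)"
    by (intro lp_norm_triangle partial_sum_in_lp one_le_p)
  also have "\<dots> \<le> basis_norm G + basis_norm H"
    by (intro add_mono lp_norm_partial_sum_le_basis_norm G H)
  finally show "lp_norm p (partial_sum (coeffs (\<lambda>n. G n + H n)) N) \<le> basis_norm G + basis_norm H" .
qed

lemma abs_coeffs_le_basis_norm: "G \<in> lp_space p \<Longrightarrow> \<bar>coeffs G i\<bar> * lp_norm p F \<le> 2 * basis_norm G"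
  using abs_coeff_le_partial_sums[of "coeffs G" i] lp_norm_partial_sum_le_basis_norm[of G "Suc i"]
    lp_norm_partial_sum_le_basis_norm[of G i] by linarith

context
  fixes a :: "nat \<Rightarrow> nat \<Rightarrow> real" and t :: "nat \<Rightarrow> real"
  assumes partial_sums_le: "\<And>k N. lp_norm p (partial_sum (a k) N) \<le> t k"
    and summable_t: "summable t"
begin

lemma series_bound_nonneg: "t k \<ge> 0"
  using lp_norm_nonneg partial_sums_le[of k 0] by (rule order_trans)

lemma summable_coeff_series: "summable (\<lambda>k. a k i)"
proof (rule summable_comparison_test'[where g="\<lambda>k. 2 * t k / lp_norm p F" and N=0])
  show "summable (\<lambda>k. 2 * t k / lp_norm p F)" by (intro summable_divide summable_mult summable_t)
  fix k
  have "\<bar>a k i\<bar> * lp_norm p F \<le> 2 * t k"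
    using abs_coeff_le_partial_sums[of "a k" i] partial_sums_le[of k "Suc i"] partial_sums_le[of k i]
    by linarith
  then show "norm (a k i) \<le> 2 * t k / lp_norm p F" using lp_norm_F_pos by (simp add: pos_le_divide_eq)
qed

lemma lp_norm_partial_sum_series_tail:
  "lp_norm p (\<lambda>n. partial_sum (\<lambda>i. \<Sum>k. a k i) N n - (\<Sum>k<K. partial_sum (a k) N n)) \<le> (\<Sum>k. t (k + K))"
proof -
  define b c where "b i = (\<Sum>k. a k i)" and "c K' i = (\<Sum>k<K'. a k i)" for i K'
  have partial_sum_c: "partial_sum (c K') N = (\<lambda>n. \<Sum>k<K'. partial_sum (a k) N n)" for K'
    unfolding c_def[abs_def] by (rule partial_sum_sum)
  have summable_tail: "summable (\<lambda>k. t (k + K))" using summable_t by (rule summable_ignore_initial_segment)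
  have "lp_norm p (\<lambda>n. partial_sum b N n - partial_sum (c K) N n) \<le>
      (\<Sum>i<N. \<bar>b i - c (K' + K) i\<bar>) * lp_norm p F + (\<Sum>k. t (k + K))" for K'
  proof -
    have "(\<Sum>k<K' + K. f k) = (\<Sum>k<K. f k) + (\<Sum>k<K'. f (k + K))" for f :: "nat \<Rightarrow> real"
      by (induction K') (simp_all add: add.commute)
    then have "(\<lambda>i. c (K' + K) i - c K i) = (\<lambda>i. \<Sum>k<K'. a (k + K) i)"
      by (simp add: c_def)
    then have "(\<lambda>n. partial_sum (c (K' + K)) N n - partial_sum (c K) N n) =
        (\<lambda>n. \<Sum>k<K'. partial_sum (a (k + K)) N n)"
      unfolding partial_sum_diff[symmetric] partial_sum_sum[symmetric] by simp
    then have "lp_norm p (\<lambda>n. partial_sum (c (K' + K)) N n - partial_sum (c K) N n) =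
        lp_norm p (\<lambda>n. \<Sum>k<K'. partial_sum (a (k + K)) N n)"
      by simp
    also have "\<dots> \<le> (\<Sum>k<K'. t (k + K))"
      by (rule order_trans[OF lp_norm_sum_le sum_mono]) (auto intro: partial_sum_in_lp one_le_p partial_sums_le)
    also have "\<dots> \<le> (\<Sum>k. t (k + K))"
      using summable_tail series_bound_nonneg by (intro sum_le_suminf) auto
    finally show ?thesis
      using lp_norm_triangle_diff[OF partial_sum_in_lp partial_sum_in_lp partial_sum_in_lp one_le_p,
          of b N "c K" N "c (K' + K)" N]
        lp_norm_partial_sum_diff_le[of b N "c (K' + K)"] by linarith
  qed
  moreover have "(\<lambda>K'. (\<Sum>i<N. \<bar>b i - c (K' + K) i\<bar>) * lp_norm p F) \<longlonglongrightarrow> 0"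
  proof -
    have "(\<lambda>K'. c (K' + K) i) \<longlonglongrightarrow> b i" for i
      unfolding b_def c_def by (rule LIMSEQ_ignore_initial_segment[OF summable_LIMSEQ[OF summable_coeff_series]])
    then have "(\<lambda>K'. (\<Sum>i<N. \<bar>b i - c (K' + K) i\<bar>) * lp_norm p F) \<longlonglongrightarrow> (\<Sum>i<N. \<bar>b i - b i\<bar>) * lp_norm p F"
      by (intro tendsto_intros)
    then show ?thesis by simp
  qed
  ultimately have "lp_norm p (\<lambda>n. partial_sum b N n - partial_sum (c K) N n) \<le> (\<Sum>k. t (k + K))"
    by (rule le_of_tendsto_add)
  then show ?thesis unfolding partial_sum_c b_def[abs_def] .
qed

end

lemma lp_expansion_series:
  assumes y: "\<And>k. y k \<in> lp_space p" and x: "x \<in> lp_space p"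
    and converges: "(\<lambda>N. lp_norm p (\<lambda>n. x n - (\<Sum>k<N. y k n))) \<longlonglongrightarrow> 0"
    and summable: "summable (\<lambda>k. basis_norm (y k))"
  shows "lp_expansion p basis_vec (\<lambda>i. \<Sum>k. coeffs (y k) i) x"
proof -
  define b where "b i = (\<Sum>k. coeffs (y k) i)" for i
  define Q where "Q K = (\<lambda>n. \<Sum>k<K. y k n)" for K
  have Q: "Q K \<in> lp_space p" for K unfolding Q_def by (intro lp_space_sum y p_pos) auto
  have "lp_norm p (\<lambda>n. partial_sum b N n - partial_sum (coeffs (Q K)) N n) \<le> (\<Sum>k. basis_norm (y (k + K)))"
    for N K
    using lp_norm_partial_sum_series_tail[of "\<lambda>k. coeffs (y k)" "\<lambda>k. basis_norm (y k)" N K]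
      lp_norm_partial_sum_le_basis_norm[OF y] summable
    unfolding Q_def coeffs_sum[OF finite_lessThan y] partial_sum_sum b_def[abs_def] by blast
  then have tail: "lp_norm p (\<lambda>n. partial_sum (coeffs (Q K)) N n - partial_sum b N n) \<le>
      (\<Sum>k. basis_norm (y (k + K)))" for N K
    by (simp add: lp_norm_minus_commute)
  show ?thesis unfolding lp_expansion_iff b_def[symmetric]
  proof (rule LIMSEQ_I)
    fix r :: real assume "r > 0"
    then obtain K1 where K1: "\<And>K. K \<ge> K1 \<Longrightarrow> norm (\<Sum>k. basis_norm (y (k + K))) < r / 3"
      using suminf_exist_split[OF _ summable, of "r / 3"] by auto
    obtain K2 where "\<forall>K\<ge>K2. norm (lp_norm p (\<lambda>n. x n - (\<Sum>k<K. y k n)) - 0) < r / 3"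
      using LIMSEQ_D[OF converges, of "r / 3"] \<open>r > 0\<close> by auto
    then have K2: "\<And>K. K \<ge> K2 \<Longrightarrow> lp_norm p (\<lambda>n. x n - Q K n) < r / 3"
      by (simp add: Q_def abs_of_nonneg lp_norm_nonneg)
    define K where "K = max K1 K2"
    obtain N0 where N0: "\<And>N. N \<ge> N0 \<Longrightarrow> lp_norm p (\<lambda>n. Q K n - partial_sum (coeffs (Q K)) N n) < r / 3"
      using LIMSEQ_D[OF lp_expansion_coeffs[OF Q, unfolded lp_expansion_iff], of "r / 3" K] \<open>r > 0\<close>
      by (auto simp: abs_of_nonneg lp_norm_nonneg)
    have "lp_norm p (\<lambda>n. x n - partial_sum b N n) < r" if "N \<ge> N0" for N
    proof -
      have "lp_norm p (\<lambda>n. x n - partial_sum b N n) \<le> lp_norm p (\<lambda>n. x n - Q K n) +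
          lp_norm p (\<lambda>n. Q K n - partial_sum (coeffs (Q K)) N n) +
          lp_norm p (\<lambda>n. partial_sum (coeffs (Q K)) N n - partial_sum b N n)"
        by (rule lp_norm_triangle_diff3) (use x Q partial_sum_in_lp one_le_p in auto)
      moreover have "K \<ge> K1" "K \<ge> K2" by (simp_all add: K_def)
      ultimately show ?thesis
        using K1[of K] K2[of K] N0[OF that] tail[of K N] abs_ge_self[of "\<Sum>k. basis_norm (y (k + K))"]
        by simp
    qed
    then show "\<exists>N0. \<forall>N\<ge>N0. norm (lp_norm p (\<lambda>n. x n - partial_sum b N n) - 0) < r"
      by (auto simp: lp_norm_nonneg)
  qed
qed

lemma basis_norm_series:
  assumes y: "\<And>k. y k \<in> lp_space p" and x: "x \<in> lp_space p"
    and converges: "(\<lambda>N. lp_norm p (\<lambda>n. x n - (\<Sum>k<N. y k n))) \<longlonglongrightarrow> 0"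
    and bounded: "\<And>N. (\<Sum>k<N. basis_norm (y k)) \<le> B"
  shows "basis_norm x \<le> B"
proof -
  have summable: "summable (\<lambda>k. basis_norm (y k))"
    using basis_norm_nonneg[OF y] bounded by (intro summableI_nonneg_bounded) auto
  have "coeffs x = (\<lambda>i. \<Sum>k. coeffs (y k) i)"
    by (rule coeffs_eqI[OF x lp_expansion_series[OF y x converges summable]])
  moreover have "lp_norm p (partial_sum (\<lambda>i. \<Sum>k. coeffs (y k) i) N) \<le> (\<Sum>k. basis_norm (y k))" for N
    using lp_norm_partial_sum_series_tail[of "\<lambda>k. coeffs (y k)" "\<lambda>k. basis_norm (y k)" N 0]
      lp_norm_partial_sum_le_basis_norm[OF y] summable by simp
  moreover have "(\<Sum>k. basis_norm (y k)) \<le> B"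
    using summable bounded by (intro suminf_le_const) auto
  ultimately show ?thesis by (intro basis_norm_leI) (metis order_trans)
qed

end

sublocale shift_basis \<subseteq> basis_norm: lp_seminorm p basis_norm
proof
  show "1 \<le> p" by (rule one_le_p)
qed (fact basis_norm_scaleR basis_norm_add basis_norm_series)+

context shift_basis
begin

lemma coeffs_bounded: "\<exists>K\<ge>0. \<forall>G\<in>lp_space p. \<forall>i. \<bar>coeffs G i\<bar> \<le> K * lp_norm p G"
proof -
  obtain C where C: "\<And>G. G \<in> lp_space p \<Longrightarrow> basis_norm G \<le> C * lp_norm p G"
    using basis_norm.bounded by blast
  define K where "K = 2 * max C 0 / lp_norm p F"
  have "\<bar>coeffs G i\<bar> \<le> K * lp_norm p G" if G: "G \<in> lp_space p" for G i
  proof -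
    have "\<bar>coeffs G i\<bar> * lp_norm p F \<le> 2 * (max C 0 * lp_norm p G)"
      using abs_coeffs_le_basis_norm[OF G, of i] C[OF G] lp_norm_nonneg[of p G]
        mult_right_mono[OF max.cobounded1[of C 0], of "lp_norm p G"] by linarith
    then show ?thesis using lp_norm_F_pos by (simp add: K_def field_simps)
  qed
  moreover have "K \<ge> 0" using lp_norm_F_pos by (simp add: K_def)
  ultimately show ?thesis by blast
qed

definition coeff_bound :: real where
  "coeff_bound = (SOME K. K \<ge> 0 \<and> (\<forall>G\<in>lp_space p. \<forall>i. \<bar>coeffs G i\<bar> \<le> K * lp_norm p G))"

lemma coeff_bound_nonneg: "coeff_bound \<ge> 0"
  and abs_coeffs_le: "G \<in> lp_space p \<Longrightarrow> \<bar>coeffs G i\<bar> \<le> coeff_bound * lp_norm p G"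
  using someI_ex[OF coeffs_bounded] unfolding coeff_bound_def by blast+

definition shift_coeff :: "int \<Rightarrow> (int \<Rightarrow> 'a) \<Rightarrow> real" where
  "shift_coeff k G = coeffs G (inv \<sigma> k)"

lemma \<sigma>_inv: "\<sigma> (inv \<sigma> k) = k" and inv_\<sigma>: "inv \<sigma> (\<sigma> i) = i"
  using bij by (auto simp: bij_def surj_f_inv_f inv_f_f)

lemma shift_coeff_sum:
  assumes "finite S" "\<And>k. k \<in> S \<Longrightarrow> G k \<in> lp_space p"
  shows "shift_coeff j (\<lambda>n. \<Sum>k\<in>S. w k *\<^sub>R G k n) = (\<Sum>k\<in>S. w k * shift_coeff j (G k))"
  unfolding shift_coeff_def using assms by (subst coeffs_sum) (auto simp: lp_space_scaleR coeffs_scaleR)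

lemma shift_coeff_tendsto:
  assumes H: "\<And>N. H N \<in> lp_space p" and G: "G \<in> lp_space p"
    and lim: "(\<lambda>N. lp_norm p (\<lambda>n. G n - H N n)) \<longlonglongrightarrow> 0"
  shows "(\<lambda>N. shift_coeff k (H N)) \<longlonglongrightarrow> shift_coeff k G"
proof -
  have "\<bar>shift_coeff k (H N) - shift_coeff k G\<bar> \<le> coeff_bound * lp_norm p (\<lambda>n. G n - H N n)" for N
    using abs_coeffs_le[OF lp_space_diff[OF G H p_pos], of N "inv \<sigma> k"]
    by (simp add: shift_coeff_def coeffs_diff[OF G H] abs_minus_commute)
  then have "(\<lambda>N. shift_coeff k (H N) - shift_coeff k G) \<longlonglongrightarrow> 0"
    by (intro Lim_null_comparison[OF always_eventually tendsto_mult_right_zero[OF lim, of coeff_bound]]) simp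
  then show ?thesis by (rule LIM_zero_cancel)
qed

text \<open>Shifting permutes the basis vectors.\<close>

lemma shift_coeff_shift:
  assumes G: "G \<in> lp_space p"
  shows "shift_coeff k (shift j G) = shift_coeff (k - j) G"
proof -
  define \<tau> \<tau>' where "\<tau> i = inv \<sigma> (\<sigma> i + j)" and "\<tau>' i = inv \<sigma> (\<sigma> i - j)" for i
  have \<tau>'_\<tau>: "\<tau>' (\<tau> i) = i" for i by (simp add: \<tau>_def \<tau>'_def \<sigma>_inv inv_\<sigma>)
  have shift_partial_sum: "shift j (partial_sum (coeffs G) N) =
      (\<lambda>n. \<Sum>m\<in>\<tau> ` {..<N}. coeffs G (\<tau>' m) *\<^sub>R basis_vec m n)" for N
  proof
    fix n
    have "shift j (partial_sum (coeffs G) N) n = (\<Sum>i<N. coeffs G i *\<^sub>R basis_vec (\<tau> i) n)"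
      by (simp add: partial_sum_def shift_def basis_vec_def \<tau>_def \<sigma>_inv algebra_simps)
    also have "\<dots> = (\<Sum>m\<in>\<tau> ` {..<N}. coeffs G (\<tau>' m) *\<^sub>R basis_vec m n)"
      using \<tau>'_\<tau> by (subst sum.reindex) (auto intro: inj_on_inverseI)
    finally show "shift j (partial_sum (coeffs G) N) n = \<dots>" .
  qed
  have "shift_coeff k (shift j (partial_sum (coeffs G) N)) = shift_coeff (k - j) G"
    if "N > inv \<sigma> (k - j)" for N
  proof -
    have "\<tau> (inv \<sigma> (k - j)) = inv \<sigma> k" "\<tau>' (inv \<sigma> k) = inv \<sigma> (k - j)"
      by (simp_all add: \<tau>_def \<tau>'_def \<sigma>_inv)
    then show ?thesis
      using that unfolding shift_coeff_def shift_partial_sum coeffs_finite_combination[OF finite_imageI[OF finite_lessThan]]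
      by (metis imageI lessThan_iff)
  qed
  then have "(\<lambda>N. shift_coeff k (shift j (partial_sum (coeffs G) N))) \<longlonglongrightarrow> shift_coeff (k - j) G"
    by (intro tendsto_eventually eventually_sequentiallyI[of "Suc (inv \<sigma> (k - j))"]) auto
  moreover have "(\<lambda>N. shift_coeff k (shift j (partial_sum (coeffs G) N))) \<longlonglongrightarrow> shift_coeff k (shift j G)"
    using lp_expansion_coeffs[OF G] unfolding lp_expansion_iff
    by (intro shift_coeff_tendsto lp_space_shift partial_sum_in_lp G)
      (simp add: lp_norm_shift[of p j "\<lambda>n. G n - partial_sum (coeffs G) _ n", unfolded shift_def] shift_def)
  ultimately show ?thesis by (rule LIMSEQ_unique[rotated])
qed

text \<open>Testing the coefficient functional at \<open>0\<close> against the combination of shifted deltas with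
  weights \<open>sgn (shift_coeff k (delta x)) * norm (F (-k))\<close>.\<close>

lemma sum_abs_shift_coeff_delta_le:
  assumes S: "finite S"
  shows "(\<Sum>k\<in>S. \<bar>shift_coeff k (delta x)\<bar> * norm (F (-k))) \<le>
    coeff_bound * (norm x * (\<Sum>k\<in>S. norm (F (-k)) powr p) powr (1/p))"
proof -
  define w where "w k = sgn (shift_coeff k (delta x)) * norm (F (-k))" for k
  define G where "G = (\<lambda>n. \<Sum>k\<in>S. w k *\<^sub>R shift (-k) (delta x) n)"
  have G_lp: "G \<in> lp_space p" unfolding G_def
    by (intro lp_space_sum lp_space_scaleR lp_space_shift delta_in_lp S p_pos)
  have "shift_coeff 0 G = (\<Sum>k\<in>S. \<bar>shift_coeff k (delta x)\<bar> * norm (F (-k)))"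
    unfolding G_def shift_coeff_sum[OF S lp_space_shift[OF delta_in_lp]]
    by (intro sum.cong refl) (simp add: shift_coeff_shift[OF delta_in_lp] w_def abs_sgn)
  moreover have "\<bar>shift_coeff 0 G\<bar> \<le> coeff_bound * lp_norm p G"
    unfolding shift_coeff_def by (rule abs_coeffs_le[OF G_lp])
  moreover have "lp_norm p G \<le> norm x * (\<Sum>k\<in>S. norm (F (-k)) powr p) powr (1/p)"
  proof -
    have "(\<Sum>k\<in>S. \<bar>w k\<bar> powr p) \<le> (\<Sum>k\<in>S. norm (F (-k)) powr p)"
      by (intro sum_mono powr_mono2) (use p_pos in \<open>auto simp: w_def abs_mult sgn_if\<close>)
    then have "(\<Sum>k\<in>S. \<bar>w k\<bar> powr p) powr (1/p) \<le> (\<Sum>k\<in>S. norm (F (-k)) powr p) powr (1/p)"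
      using p_pos by (intro powr_mono2) (auto intro: sum_nonneg)
    then show ?thesis
      using lp_norm_sum_shifted_deltas_le[OF S p_pos, of w x] unfolding G_def
      by (meson mult_left_mono norm_ge_zero order_trans)
  qed
  ultimately show ?thesis
    using coeff_bound_nonneg by (smt (verit) mult_left_mono)
qed

lemma expansion_at_zero: "(\<lambda>N. \<Sum>i<N. coeffs (delta x) i *\<^sub>R F (- \<sigma> i)) \<longlonglongrightarrow> x"
proof -
  have partial_sum_at_0: "partial_sum a N 0 = (\<Sum>i<N. a i *\<^sub>R F (- \<sigma> i))" for a N
    by (simp add: partial_sum_def basis_vec_def shift_def)
  have delta_at_0: "delta y 0 = y" for y :: 'a by (simp add: delta_def)
  have "\<forall>N. norm (x - (\<Sum>i<N. coeffs (delta x) i *\<^sub>R F (- \<sigma> i))) \<le>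
      lp_norm p (\<lambda>n. delta x n - partial_sum (coeffs (delta x)) N n)"
  proof
    fix N
    show "norm (x - (\<Sum>i<N. coeffs (delta x) i *\<^sub>R F (- \<sigma> i))) \<le>
        lp_norm p (\<lambda>n. delta x n - partial_sum (coeffs (delta x)) N n)"
      using norm_le_lp_norm[OF lp_space_diff[OF delta_in_lp partial_sum_in_lp p_pos] p_pos, where n=0]
      unfolding partial_sum_at_0 delta_at_0 .
  qed
  from Lim_null_comparison[OF always_eventually[OF this]]
  have "(\<lambda>N. x - (\<Sum>i<N. coeffs (delta x) i *\<^sub>R F (- \<sigma> i))) \<longlonglongrightarrow> 0"
    using lp_expansion_coeffs[OF delta_in_lp] unfolding lp_expansion_iff .
  from tendsto_diff[OF tendsto_const[of x] this] show ?thesis by simp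
qed

lemma norm_sum_expansion_terms_le:
  assumes I: "finite I" and small: "(\<Sum>i\<in>I. norm (F (- \<sigma> i)) powr p) \<le> d powr p" and "d \<ge> 0"
  shows "norm (\<Sum>i\<in>I. coeffs (delta x) i *\<^sub>R F (- \<sigma> i)) \<le> coeff_bound * (norm x * d)"
proof -
  have inj: "inj_on \<sigma> I" using bij by (auto simp: bij_def intro: inj_on_subset)
  have sum_eq: "(\<Sum>k\<in>\<sigma> ` I. g k) = (\<Sum>i\<in>I. g (\<sigma> i))" for g :: "int \<Rightarrow> real"
    by (rule sum.reindex[OF inj, unfolded comp_def])
  have "norm (\<Sum>i\<in>I. coeffs (delta x) i *\<^sub>R F (- \<sigma> i)) \<le> (\<Sum>i\<in>I. \<bar>coeffs (delta x) i\<bar> * norm (F (- \<sigma> i)))"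
    by (rule order_trans[OF norm_sum]) simp
  also have "\<dots> = (\<Sum>k\<in>\<sigma> ` I. \<bar>shift_coeff k (delta x)\<bar> * norm (F (-k)))"
    unfolding sum_eq by (simp add: shift_coeff_def inv_\<sigma>)
  also have "\<dots> \<le> coeff_bound * (norm x * (\<Sum>i\<in>I. norm (F (- \<sigma> i)) powr p) powr (1/p))"
    using sum_abs_shift_coeff_delta_le[of "\<sigma> ` I" x] I unfolding sum_eq by simp
  also have "\<dots> \<le> coeff_bound * (norm x * d)"
  proof -
    have "(\<Sum>i\<in>I. norm (F (- \<sigma> i)) powr p) powr (1/p) \<le> (d powr p) powr (1/p)"
      using small p_pos by (intro powr_mono2) (auto intro: sum_nonneg)
    then show ?thesis
      using p_pos \<open>d \<ge> 0\<close> coeff_bound_nonneg by (simp add: powr_powr mult_left_mono)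
  qed
  finally show ?thesis .
qed

text \<open>Every vector is approximated by the finite part of its expansion at the origin; the terms
  with \<open>- \<sigma> i\<close> outside a large finite set contribute little because \<open>F\<close> is p-summable and the
  coefficients are uniformly controlled.\<close>

lemma finite_values_span_approximates:
  obtains S where "finite S" "\<And>x. x \<noteq> 0 \<Longrightarrow> \<exists>v\<in>span (F ` S). norm (x - v) < norm x / 2"
proof -
  define d where "d = 1 / (8 * (coeff_bound + 1))"
  have d: "d > 0" "coeff_bound * d \<le> 1/8" using coeff_bound_nonneg by (auto simp: d_def field_simps)
  obtain S where S: "finite S"
    and tail: "\<And>T. finite T \<Longrightarrow> T \<inter> S = {} \<Longrightarrow> (\<Sum>n\<in>T. norm (F n) powr p) \<le> d powr p"
    using finite_tail_bound[of "\<lambda>n. norm (F n) powr p" "d powr p"] F d(1) by (auto simp: lp_space_def)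
  show ?thesis
  proof (rule that[OF S])
    fix x :: 'a assume "x \<noteq> 0"
    define c where "c i = coeffs (delta x) i *\<^sub>R F (- \<sigma> i)" for i
    obtain N where N: "norm (x - (\<Sum>i<N. c i)) < norm x / 4"
      using LIMSEQ_D[OF expansion_at_zero[of x], of "norm x / 4"] \<open>x \<noteq> 0\<close>
      by (auto simp: c_def norm_minus_commute)
    define I where "I = {i \<in> {..<N}. - \<sigma> i \<notin> S}"
    define v where "v = (\<Sum>i\<in>{..<N} - I. c i)"
    have "v \<in> span (F ` S)" unfolding v_def c_def I_def
      by (intro span_sum span_scale span_base) auto
    have "(\<Sum>i\<in>I. norm (F (- \<sigma> i)) powr p) = (\<Sum>n\<in>(\<lambda>i. - \<sigma> i) ` I. norm (F n) powr p)"
      using bij by (subst sum.reindex) (auto simp: bij_def inj_on_def)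
    also have "\<dots> \<le> d powr p" by (rule tail) (auto simp: I_def)
    finally have "norm (\<Sum>i\<in>I. c i) \<le> coeff_bound * (norm x * d)"
      unfolding c_def by (rule norm_sum_expansion_terms_le[OF _ _ less_imp_le[OF d(1)], rotated]) (simp add: I_def)
    also have "\<dots> = norm x * (coeff_bound * d)" by simp
    also have "\<dots> \<le> norm x / 8" using mult_left_mono[OF d(2) norm_ge_zero[of x]] by simp
    finally have "norm (\<Sum>i\<in>I. c i) \<le> norm x / 8" .
    moreover have "(\<Sum>i<N. c i) = v + (\<Sum>i\<in>I. c i)"
      unfolding v_def by (rule sum.subset_diff[of I]) (auto simp: I_def)
    ultimately have "norm (x - v) \<le> norm (x - (\<Sum>i<N. c i)) + norm x / 8"
      using norm_triangle_ineq[of "x - (\<Sum>i<N. c i)" "\<Sum>i\<in>I. c i"] by simp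
    then have "norm (x - v) < norm x / 2"
      using N norm_ge_zero[of "x - (\<Sum>i<N. c i)"] by linarith
    then show "\<exists>v\<in>span (F ` S). norm (x - v) < norm x / 2" using \<open>v \<in> span (F ` S)\<close> by blast
  qed
qed

end

theorem proposition3p5:
  fixes p :: real and F :: "int \<Rightarrow> 'a::banach"
  assumes separable: "\<exists>D::'a set. countable D \<and> closure D = UNIV"
    and inf_dim: "\<not> (\<exists>B::'a set. finite B \<and> span B = UNIV)"
    and p: "1 \<le> p"
    and F: "F \<in> lp_space p"
  shows "\<not> (\<exists>\<sigma>::nat \<Rightarrow> int. bij \<sigma> \<and> lp_schauder_basis p (\<lambda>i. shift (\<sigma> i) F))"
proof
  assume "\<exists>\<sigma>::nat \<Rightarrow> int. bij \<sigma> \<and> lp_schauder_basis p (\<lambda>i. shift (\<sigma> i) F)"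
  then obtain \<sigma> where "shift_basis p F \<sigma>" using p F by (auto simp: shift_basis_def)
  then obtain S where S: "finite S" "\<And>x. x \<noteq> 0 \<Longrightarrow> \<exists>v\<in>span (F ` S). norm (x - v) < norm x / 2"
    using shift_basis.finite_values_span_approximates by blast
  have "span (F ` S) = UNIV"
  proof (rule ccontr)
    assume "span (F ` S) \<noteq> UNIV"
    then obtain x where "x \<noteq> 0" "\<And>v. v \<in> span (F ` S) \<Longrightarrow> norm (x - v) > norm x / 2"
      using exists_far_from_finite_span[of "F ` S"] S(1) by blast
    then show False using S(2)[of x] by fastforce
  qed
  then show False using inf_dim S(1) by blast
qed

end
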